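(* Let $H_k = F_k[2..f_k]$ for $k\ge 2$. Then (i) for every $k \geq 2$, both $H_k$ and $H_k\cdot a$ are Nyldon words; (ii) for every $k\geq 4$, the longest Nyldon proper suffix of $H_k$ is $H_{k-2}$, and the longest Nyldon proper suffix of $H_k\cdot a$ is $H_{k-2}\cdot a$.
   Context: Strings are over the binary alphabet $\{a,b\}$ ordered by $a \prec b$, and $\prec$ also denotes the induced lexicographic order on strings: $x \prec y$ iff $x$ is a proper prefix of $y$, or there is $i$ with $x[1..i-1]=y[1..i-1]$ and $x[i]\prec y[i]$; $x\preceq y$ means $x\prec y$ or $x=y$. For a string $w$, $w[i..j]$ denotes the substring from position $i$ to position $j$ (1-indexed). Nyldon words are defined recursively: every string of length $1$ is a Nyldon word; a string $w$ with $|w|\ge 2$ is a Nyldon word iff there is no factorization $w=\gamma_1\cdots\gamma_m$ with $m\ge 2$, each $\gamma_i$ a nonempty Nyldon word, and $\gamma_1\preceq\gamma_2\preceq\cdots\preceq\gamma_m$. A Nyldon proper suffix of $w$ is a proper suffix of $w$ that is a Nyldon word; the longest Nyldon proper suffix of $w$ is the longest such suffix. Fibonacci words: $F_0=b$, $F_1=a$, $F_k=F_{k-1}F_{k-2}$ for $k\ge 2$; $f_k=|F_k|$. *)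

theory Defs
  imports Main
begin

datatype letter = a | b

definition letter_less :: "letter \<Rightarrow> letter \<Rightarrow> bool" where
  "letter_less x y \<longleftrightarrow> x = a \<and> y = b"

definition lex_less :: "letter list \<Rightarrow> letter list \<Rightarrow> bool" where
  "lex_less x y \<longleftrightarrow>
     (\<exists>u. u \<noteq> [] \<and> y = x @ u) \<or>
     (\<exists>p c d s t. x = p @ [c] @ s \<and> y = p @ [d] @ t \<and> letter_less c d)"

definition lex_le :: "letter list \<Rightarrow> letter list \<Rightarrow> bool" where
  "lex_le x y \<longleftrightarrow> lex_less x y \<or> x = y"

lemmas [fundef_cong] = conj_cong

function nyldon :: "letter list \<Rightarrow> bool" where
  "nyldon w \<longleftrightarrow>
     length w = 1 \<or>
     (length w \<ge> 2 \<and>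
      \<not> (\<exists>gs. length gs \<ge> 2 \<and> concat gs = w \<and>
             (\<forall>i < length gs - 1. lex_le (gs ! i) (gs ! Suc i)) \<and>
             (\<forall>g \<in> set gs. g \<noteq> []) \<and>
             (\<forall>g \<in> set gs. nyldon g)))"
  by auto
termination
proof (relation "measure length", goal_cases)
  case 1 then show ?case by simp
next
  case (2 w gs g)
  then have g: "g \<in> set gs" and ne: "\<forall>h\<in>set gs. h \<noteq> []"
    and l: "2 \<le> length gs" and c: "concat gs = w" by auto
  have len: "length w = length g + sum_list (map length (remove1 g gs))"
    unfolding c[symmetric] length_concat by (rule sum_list_map_remove1[OF g])
  have "remove1 g gs \<noteq> []"
  proof
    assume "remove1 g gs = []"
    then have "length (remove1 g gs) = 0" by simp
    with g l show False by (simp add: length_remove1)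
  qed
  then obtain h where h: "h \<in> set (remove1 g gs)"
    by (cases "remove1 g gs") auto
  then have "h \<in> set gs" by (meson set_remove1_subset subsetD)
  with ne have "length h > 0" by auto
  moreover have "length h \<le> sum_list (map length (remove1 g gs))"
    using h by (simp add: member_le_sum_list)
  ultimately show ?case using len by (simp del: length_greater_0_conv)
qed

fun fibw :: "nat \<Rightarrow> letter list" where
  "fibw 0 = [b]"
| "fibw (Suc 0) = [a]"
| "fibw (Suc (Suc k)) = fibw (Suc k) @ fibw k"

definition H :: "nat \<Rightarrow> letter list" where
  "H k = drop 1 (fibw k)"

definition proper_suffix :: "letter list \<Rightarrow> letter list \<Rightarrow> bool" where
  "proper_suffix s w \<longleftrightarrow> (\<exists>u. u \<noteq> [] \<and> w = u @ s)"

definition is_longest_nyldon_proper_suffix :: "letter list \<Rightarrow> letter list \<Rightarrow> bool" where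
  "is_longest_nyldon_proper_suffix s w \<longleftrightarrow>
     proper_suffix s w \<and> nyldon s \<and>
     (\<forall>t. proper_suffix t w \<and> nyldon t \<longrightarrow> length t \<le> length s)"

end

(*
  A Nyldon factorization of w is a factorization into Nyldon words that is
  nondecreasing in the lexicographic order; every nonempty word has one.  By a
  simultaneous induction on the length of w one shows that no Nyldon suffix of w
  is longer than the last factor of a Nyldon factorization of w, and that a
  Nyldon word is greater than each of its Nyldon proper suffixes.  Consequently,
  if p and q are Nyldon words with q < p and every Nyldon proper suffix of p is
  at most q, then pq is a Nyldon word whose longest Nyldon proper suffix is q.

  The Fibonacci recursion gives H_k = (H_(k-1) a) H_(k-2), so this criterion
  applies with p = H_(k-1) a and q = H_(k-2) or q = H_(k-2) a: by induction the
  longest Nyldon proper suffix of p is H_(k-3) a, which is at most H_(k-2).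
*)

theory Submission
  imports Defs "HOL-Library.List_Lexorder"
begin

(* The defining equation of nyldon unfolds forever under the simplifier. *)
declare nyldon.simps [simp del]

instantiation letter :: linorder
begin

definition less_letter_def: "x < y \<longleftrightarrow> letter_less x y"

definition less_eq_letter_def: "x \<le> y \<longleftrightarrow> x = y \<or> letter_less x y"

instance
  by standard (auto simp: less_letter_def less_eq_letter_def letter_less_def; metis letter.exhaust)+

end

lemma lex_less_iff_less: "lex_less x y \<longleftrightarrow> x < y"
  unfolding lex_less_def list_less_def lexord_def less_letter_def
  by (fastforce simp: neq_Nil_conv)

lemma lex_le_iff_le: "lex_le x y \<longleftrightarrow> x \<le> y"
  by (simp add: lex_le_def lex_less_iff_less order_le_less)

lemma list_less_append_right: "ys \<noteq> [] \<Longrightarrow> xs < xs @ ys"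
  by (simp add: list_less_def lexord_append_rightI neq_Nil_conv)

lemma list_le_append_right: "xs \<le> xs @ ys"
  by (cases ys) (simp_all add: list_le_def list_less_append_right)

lemma list_less_imp_less_append: "xs < ys \<Longrightarrow> xs < ys @ zs"
proof (induction xs arbitrary: ys)
  case Nil
  then show ?case by (cases ys) simp_all
next
  case (Cons x xs)
  then show ?case by (cases ys) auto
qed

definition nyldon_factorization :: "letter list list \<Rightarrow> letter list \<Rightarrow> bool" where
  "nyldon_factorization gs w \<longleftrightarrow> concat gs = w \<and> sorted gs \<and> (\<forall>g\<in>set gs. nyldon g)"

lemma nyldon_not_Nil: "nyldon w \<Longrightarrow> w \<noteq> []"
  by (subst (asm) nyldon.simps) auto

lemma nyldon_iff_factorizations_short:
  "nyldon w \<longleftrightarrow> w \<noteq> [] \<and> (\<forall>gs. nyldon_factorization gs w \<longrightarrow> length gs < 2)"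
proof (cases "length w = 1")
  case True
  have "length gs \<le> length (concat gs)" if "\<forall>g\<in>set gs. nyldon g" for gs
    using that by (induction gs) (auto dest!: nyldon_not_Nil simp flip: length_greater_0_conv)
  with True show ?thesis
    unfolding nyldon_factorization_def by (subst nyldon.simps) fastforce
next
  case False
  then have "w \<noteq> [] \<longleftrightarrow> 2 \<le> length w"
    by (cases w) (auto simp: Suc_le_eq)
  moreover have "sorted gs \<longleftrightarrow> (\<forall>i < length gs - 1. lex_le (gs ! i) (gs ! Suc i))" for gs
    by (auto simp: sorted_iff_nth_Suc lex_le_iff_le)
  moreover have "(\<forall>g\<in>set gs. g \<noteq> []) \<and> (\<forall>g\<in>set gs. nyldon g) \<longleftrightarrow> (\<forall>g\<in>set gs. nyldon g)" for gs
    using nyldon_not_Nil by blast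
  ultimately show ?thesis
    using False unfolding nyldon_factorization_def
    by (subst nyldon.simps) (auto simp: not_less)
qed

lemma nyldon_factorization_length_less:
  "nyldon w \<Longrightarrow> nyldon_factorization gs w \<Longrightarrow> length gs < 2"
  by (simp add: nyldon_iff_factorizations_short)

lemma nyldon_factorization_Nil_iff:
  "nyldon_factorization gs w \<Longrightarrow> w = [] \<longleftrightarrow> gs = []"
  unfolding nyldon_factorization_def by (cases gs) (auto dest: nyldon_not_Nil)

lemma nyldon_factorization_exists:
  assumes "w \<noteq> []"
  obtains gs g where "nyldon_factorization (gs @ [g]) w"
proof -
  have "\<exists>gs. nyldon_factorization gs w"
  proof (cases "nyldon w")
    case True
    then show ?thesis
      by (intro exI[of _ "[w]"]) (simp add: nyldon_factorization_def)
  next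
    case False
    with assms show ?thesis
      by (auto simp: nyldon_iff_factorizations_short)
  qed
  then show thesis
    using that assms nyldon_factorization_Nil_iff by (metis rev_exhaust)
qed

lemma nyldon_factorization_of_nyldon:
  assumes "nyldon w" "nyldon_factorization gs w"
  shows "gs = [w]"
proof -
  have "gs \<noteq> []" "length gs < 2"
    using assms nyldon_not_Nil nyldon_factorization_Nil_iff nyldon_factorization_length_less
    by blast+
  with assms(2) show ?thesis
    by (cases gs) (auto simp: nyldon_factorization_def)
qed

lemma nyldon_factorization_append:
  assumes "nyldon_factorization gs u" "nyldon_factorization hs v"
    and "\<forall>g\<in>set gs. \<forall>h\<in>set hs. g \<le> h"
  shows "nyldon_factorization (gs @ hs) (u @ v)"
  using assms by (auto simp: nyldon_factorization_def sorted_append)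

lemma nyldon_factorization_snoc_le:
  "nyldon_factorization (gs @ [g]) w \<Longrightarrow> h \<in> set gs \<Longrightarrow> h \<le> g"
  by (simp add: nyldon_factorization_def sorted_append)

lemma shorter_suffix_is_suffix:
  "u @ s = u' @ t \<Longrightarrow> length t \<le> length s \<Longrightarrow> \<exists>v. s = v @ t"
  by (auto simp: append_eq_append_conv2)

lemma suffix_of_concat:
  "concat gs = u @ s \<Longrightarrow> s \<noteq> [] \<Longrightarrow>
   \<exists>hs g cs y x. gs = hs @ g # cs \<and> g = y @ x \<and> x \<noteq> [] \<and> s = x @ concat cs"
proof (induction gs arbitrary: s rule: rev_induct)
  case Nil
  then show ?case by simp
next
  case (snoc g gs)
  then obtain us where
    "concat gs @ us = u \<and> g = us @ s \<or> concat gs = u @ us \<and> s = us @ g"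
    by (auto simp: append_eq_append_conv2)
  then show ?case
  proof (elim disjE conjE)
    assume "g = us @ s"
    with snoc.prems(2) show ?case
      by (intro exI[of _ gs] exI[of _ g] exI[of _ "[]"] exI[of _ us] exI[of _ s]) auto
  next
    assume us: "concat gs = u @ us" "s = us @ g"
    show ?case
    proof (cases "us = []")
      case True
      with us snoc.prems(2) show ?thesis
        by (intro exI[of _ gs] exI[of _ g] exI[of _ "[]"] exI[of _ "[]"]) auto
    next
      case False
      with us snoc.IH obtain hs g' cs y x where
        "gs = hs @ g' # cs" "g' = y @ x" "x \<noteq> []" "us = x @ concat cs"
        by blast
      with us show ?thesis
        by (intro exI[of _ hs] exI[of _ g'] exI[of _ "cs @ [g]"] exI[of _ y] exI[of _ x]) auto
    qed
  qed
qed

lemma long_nyldon_factorization_of_suffix: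
  assumes fact: "nyldon_factorization (n # cs) v" and "cs \<noteq> []" "n = y @ x" "x \<noteq> []"
    and less_n: "\<And>m. proper_suffix m n \<Longrightarrow> nyldon m \<Longrightarrow> m < n"
  shows "\<exists>fs. nyldon_factorization fs (x @ concat cs) \<and> 2 \<le> length fs"
proof (cases "y = []")
  case True
  with assms show ?thesis
    by (intro exI[of _ "n # cs"]) (auto simp: nyldon_factorization_def Suc_le_eq)
next
  case False
  obtain ms m where fact_x: "nyldon_factorization (ms @ [m]) x"
    using nyldon_factorization_exists \<open>x \<noteq> []\<close> by blast
  have fact_cs: "nyldon_factorization cs (concat cs)"
    using fact by (simp add: nyldon_factorization_def)
  have "proper_suffix m n"
    using fact_x \<open>n = y @ x\<close> False unfolding proper_suffix_def nyldon_factorization_def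
    by (intro exI[of _ "y @ concat ms"]) auto
  with fact_x have "m < n"
    using less_n by (simp add: nyldon_factorization_def)
  moreover have "f \<le> m" if "f \<in> set (ms @ [m])" for f
    using nyldon_factorization_snoc_le[OF fact_x] that by auto
  moreover have "n \<le> c" if "c \<in> set cs" for c
    using fact that by (simp add: nyldon_factorization_def)
  ultimately have "\<forall>f\<in>set (ms @ [m]). \<forall>c\<in>set cs. f \<le> c"
    by (meson order.strict_implies_order order_trans)
  with fact_x fact_cs have "nyldon_factorization ((ms @ [m]) @ cs) (x @ concat cs)"
    by (rule nyldon_factorization_append)
  with \<open>cs \<noteq> []\<close> show ?thesis
    by (intro exI[of _ "(ms @ [m]) @ cs"]) (simp add: Suc_le_eq)
qed

lemma nyldon_suffix_le_last_factor_step: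
  assumes less_if_shorter:
      "\<And>v m. length v < length w \<Longrightarrow> nyldon v \<Longrightarrow> proper_suffix m v \<Longrightarrow> nyldon m \<Longrightarrow> m < v"
    and fact: "nyldon_factorization (gs @ [g]) w" and t: "nyldon t" "w = u @ t"
  shows "length t \<le> length g"
proof (rule ccontr)
  assume long: "\<not> length t \<le> length g"
  have "concat (gs @ [g]) = u @ t"
    using fact t(2) by (simp add: nyldon_factorization_def)
  from suffix_of_concat[OF this nyldon_not_Nil[OF t(1)]] obtain hs n cs y x where
    split: "gs @ [g] = hs @ n # cs" "n = y @ x" "x \<noteq> []" "t = x @ concat cs"
    by blast
  have "cs \<noteq> []"
  proof
    assume "cs = []"
    with split long show False by simp
  qed
  from fact split have fact_n_cs: "nyldon_factorization (n # cs) (n @ concat cs)"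
    by (simp add: nyldon_factorization_def sorted_append)
  have "w = concat hs @ n @ concat cs"
    using fact split(1) unfolding nyldon_factorization_def by (metis concat.simps(2) concat_append)
  moreover have "concat cs \<noteq> []"
    using fact_n_cs \<open>cs \<noteq> []\<close> nyldon_factorization_Nil_iff
    by (simp add: nyldon_factorization_def)
  ultimately have "length n < length w"
    by simp
  moreover have "nyldon n"
    using fact_n_cs by (simp add: nyldon_factorization_def)
  ultimately obtain fs where "nyldon_factorization fs t" "2 \<le> length fs"
    using long_nyldon_factorization_of_suffix[OF fact_n_cs \<open>cs \<noteq> []\<close> split(2,3)]
      less_if_shorter split(4) by blast
  with t show False
    using nyldon_factorization_length_less by fastforce
qed

lemma longest_nyldon_proper_suffix_exists:
  assumes "proper_suffix m w" "nyldon m"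
  obtains s where "is_longest_nyldon_proper_suffix s w"
proof -
  have "\<forall>t. proper_suffix t w \<and> nyldon t \<longrightarrow> length t < length w"
    by (auto simp: proper_suffix_def)
  with assms obtain s where
    "proper_suffix s w \<and> nyldon s" "\<forall>t. proper_suffix t w \<and> nyldon t \<longrightarrow> length t \<le> length s"
    using Lattices_Big.ex_has_greatest_nat[of "\<lambda>t. proper_suffix t w \<and> nyldon t" m length "length w"]
    by blast
  then show thesis
    using that by (auto simp: is_longest_nyldon_proper_suffix_def)
qed

lemma le_longest_nyldon_proper_suffix:
  assumes longest: "is_longest_nyldon_proper_suffix s w" and t: "proper_suffix t w" "nyldon t"
    and less_s: "\<And>m. proper_suffix m s \<Longrightarrow> nyldon m \<Longrightarrow> m < s"
  shows "t \<le> s"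
proof -
  obtain u u' where "w = u @ s" "w = u' @ t" "length t \<le> length s"
    using longest t by (auto simp: is_longest_nyldon_proper_suffix_def proper_suffix_def)
  then obtain v where "s = v @ t"
    using shorter_suffix_is_suffix by metis
  with t(2) less_s show ?thesis
    by (cases "v = []") (auto simp: proper_suffix_def intro: order.strict_implies_order)
qed

lemma nyldon_factor_le_longest_suffix:
  assumes le_last: "\<And>gs g t u. nyldon_factorization (gs @ [g]) (p @ s) \<Longrightarrow> nyldon t \<Longrightarrow>
      p @ s = u @ t \<Longrightarrow> length t \<le> length g"
    and "nyldon p" and longest: "is_longest_nyldon_proper_suffix s (v @ p @ s)" and "v \<noteq> []"
  shows "p \<le> s"
proof -
  have "nyldon s"
    using longest by (simp add: is_longest_nyldon_proper_suffix_def)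
  then obtain zs z where fact_z: "nyldon_factorization (zs @ [z]) (p @ s)"
    using nyldon_factorization_exists nyldon_not_Nil by blast
  then have z_eq: "p @ s = concat zs @ z" and "nyldon z"
    by (auto simp: nyldon_factorization_def)
  have "length s \<le> length z"
    using le_last[OF fact_z \<open>nyldon s\<close>] by blast
  moreover have "proper_suffix z (v @ p @ s)"
    using z_eq \<open>v \<noteq> []\<close> unfolding proper_suffix_def
    by (intro exI[of _ "v @ concat zs"]) simp
  with longest \<open>nyldon z\<close> have "length z \<le> length s"
    by (simp add: is_longest_nyldon_proper_suffix_def)
  ultimately have "z = s" "concat zs = p"
    using z_eq by (auto simp: append_eq_append_conv)
  then have "zs = [p]"
    using nyldon_factorization_of_nyldon[OF \<open>nyldon p\<close>] fact_z
    by (simp add: nyldon_factorization_def sorted_append)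
  with fact_z \<open>z = s\<close> show "p \<le> s"
    by (simp add: nyldon_factorization_def)
qed

lemma nyldon_standard_factorization_step:
  assumes le_if_shorter: "\<And>v gs g t u. length v < length w \<Longrightarrow>
      nyldon_factorization (gs @ [g]) v \<Longrightarrow> nyldon t \<Longrightarrow> v = u @ t \<Longrightarrow> length t \<le> length g"
    and "nyldon w" and longest: "is_longest_nyldon_proper_suffix s w" and w: "w = u @ s"
  shows "nyldon u \<and> s < u"
proof -
  have "u \<noteq> []" "nyldon s"
    using longest w by (auto simp: is_longest_nyldon_proper_suffix_def proper_suffix_def)
  obtain ps p where fact_u: "nyldon_factorization (ps @ [p]) u"
    using nyldon_factorization_exists \<open>u \<noteq> []\<close> by blast
  then have "nyldon p"
    by (simp add: nyldon_factorization_def)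
  have "ps = []"
  proof (rule ccontr)
    assume "ps \<noteq> []"
    then have "concat ps \<noteq> []"
      using fact_u nyldon_factorization_Nil_iff
      by (simp add: nyldon_factorization_def sorted_append)
    have w_eq: "w = concat ps @ p @ s"
      using fact_u w by (simp add: nyldon_factorization_def)
    have "p \<le> s"
    proof (rule nyldon_factor_le_longest_suffix[of p s "concat ps"])
      show "length t \<le> length g"
        if "nyldon_factorization (gs @ [g]) (p @ s)" "nyldon t" "p @ s = u' @ t" for gs g t u'
        using le_if_shorter[OF _ that] w_eq \<open>concat ps \<noteq> []\<close> by simp
      show "is_longest_nyldon_proper_suffix s (concat ps @ p @ s)"
        using longest w_eq by simp
    qed (fact \<open>nyldon p\<close> \<open>concat ps \<noteq> []\<close>)+
    then have "\<forall>f\<in>set (ps @ [p]). f \<le> s"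
      using nyldon_factorization_snoc_le[OF fact_u] by (auto intro: order_trans)
    then have "nyldon_factorization ((ps @ [p]) @ [s]) w"
      using nyldon_factorization_append[OF fact_u, of "[s]" s] \<open>nyldon s\<close> w
      by (simp add: nyldon_factorization_def)
    then show False
      using nyldon_factorization_length_less \<open>nyldon w\<close> by fastforce
  qed
  with fact_u \<open>nyldon p\<close> have "nyldon u"
    by (simp add: nyldon_factorization_def)
  moreover have "s < u"
  proof (rule ccontr)
    assume "\<not> s < u"
    with \<open>nyldon u\<close> \<open>nyldon s\<close> w have "nyldon_factorization [u, s] w"
      by (simp add: nyldon_factorization_def)
    then show False
      using nyldon_factorization_length_less \<open>nyldon w\<close> by fastforce
  qed
  ultimately show ?thesis ..
qed

lemma nyldon_proper_suffix_less_step: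
  assumes le_if_shorter: "\<And>v gs g t u. length v < length w \<Longrightarrow>
      nyldon_factorization (gs @ [g]) v \<Longrightarrow> nyldon t \<Longrightarrow> v = u @ t \<Longrightarrow> length t \<le> length g"
    and less_if_shorter:
      "\<And>v m. length v < length w \<Longrightarrow> nyldon v \<Longrightarrow> proper_suffix m v \<Longrightarrow> nyldon m \<Longrightarrow> m < v"
    and "nyldon w" "proper_suffix m w" "nyldon m"
  shows "m < w"
proof -
  obtain s where longest: "is_longest_nyldon_proper_suffix s w"
    using longest_nyldon_proper_suffix_exists assms(4,5) by blast
  then obtain u where w: "w = u @ s" "u \<noteq> []" and "nyldon s"
    by (auto simp: is_longest_nyldon_proper_suffix_def proper_suffix_def)
  then have "s < w"
    using nyldon_standard_factorization_step[OF le_if_shorter \<open>nyldon w\<close> longest]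
    by (simp add: list_less_imp_less_append)
  moreover have "m \<le> s"
  proof (rule le_longest_nyldon_proper_suffix[OF longest assms(4,5)])
    show "m' < s" if "proper_suffix m' s" "nyldon m'" for m'
      using less_if_shorter[OF _ \<open>nyldon s\<close> that] w by simp
  qed
  ultimately show ?thesis
    by simp
qed

lemma nyldon_suffix_properties:
  "(\<forall>gs g t u. nyldon_factorization (gs @ [g]) w \<longrightarrow> nyldon t \<longrightarrow> w = u @ t \<longrightarrow>
      length t \<le> length g) \<and>
   (\<forall>m. nyldon w \<longrightarrow> proper_suffix m w \<longrightarrow> nyldon m \<longrightarrow> m < w)"
proof (induction w rule: length_induct)
  case (1 w)
  have le_if_shorter: "\<And>v gs g t u. length v < length w \<Longrightarrow>
      nyldon_factorization (gs @ [g]) v \<Longrightarrow> nyldon t \<Longrightarrow> v = u @ t \<Longrightarrow> length t \<le> length g"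
    using "1.IH" by blast
  have less_if_shorter:
    "\<And>v m. length v < length w \<Longrightarrow> nyldon v \<Longrightarrow> proper_suffix m v \<Longrightarrow> nyldon m \<Longrightarrow> m < v"
    using "1.IH" by blast
  show ?case
  proof (intro conjI allI impI)
    fix gs g t u
    assume "nyldon_factorization (gs @ [g]) w" "nyldon t" "w = u @ t"
    then show "length t \<le> length g"
      by (intro nyldon_suffix_le_last_factor_step[of w] less_if_shorter)
  next
    fix m
    assume "nyldon w" "proper_suffix m w" "nyldon m"
    then show "m < w"
      by (intro nyldon_proper_suffix_less_step[of w] le_if_shorter less_if_shorter)
  qed
qed

theorem nyldon_suffix_le_last_factor:
  "nyldon_factorization (gs @ [g]) w \<Longrightarrow> nyldon t \<Longrightarrow> w = u @ t \<Longrightarrow> length t \<le> length g"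
  using nyldon_suffix_properties by blast

theorem nyldon_proper_suffix_less:
  "nyldon w \<Longrightarrow> proper_suffix m w \<Longrightarrow> nyldon m \<Longrightarrow> m < w"
  using nyldon_suffix_properties by blast

lemma length_nyldon_proper_suffix_of_append_le:
  assumes "nyldon q" and le_q: "\<And>t. proper_suffix t p \<Longrightarrow> nyldon t \<Longrightarrow> t \<le> q"
    and t: "proper_suffix t (p @ q)" "nyldon t"
  shows "length t \<le> length q"
proof (rule ccontr)
  assume long: "\<not> length t \<le> length q"
  obtain v where "v \<noteq> []" "p @ q = v @ t"
    using t(1) by (auto simp: proper_suffix_def)
  then obtain x where p: "p = v @ x" and "t = x @ q"
    using long by (auto simp: append_eq_append_conv2)
  with long have "x \<noteq> []"
    by auto
  then obtain ms m where fact_x: "nyldon_factorization (ms @ [m]) x"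
    using nyldon_factorization_exists by blast
  with p \<open>v \<noteq> []\<close> have "proper_suffix m p"
    unfolding proper_suffix_def nyldon_factorization_def
    by (intro exI[of _ "v @ concat ms"]) auto
  with fact_x have "m \<le> q"
    using le_q by (simp add: nyldon_factorization_def)
  then have "\<forall>f\<in>set (ms @ [m]). f \<le> q"
    using nyldon_factorization_snoc_le[OF fact_x] by (auto intro: order_trans)
  then have "nyldon_factorization ((ms @ [m]) @ [q]) t"
    using nyldon_factorization_append[OF fact_x, of "[q]" q] \<open>nyldon q\<close> \<open>t = x @ q\<close>
    by (simp add: nyldon_factorization_def)
  then show False
    using nyldon_factorization_length_less \<open>nyldon t\<close> by fastforce
qed

lemma nyldon_append:
  assumes "nyldon p" "nyldon q" "q < p"
    and le_q: "\<And>t. proper_suffix t p \<Longrightarrow> nyldon t \<Longrightarrow> t \<le> q"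
  shows "nyldon (p @ q) \<and> is_longest_nyldon_proper_suffix q (p @ q)"
proof -
  have short: "length t \<le> length q" if "proper_suffix t (p @ q)" "nyldon t" for t
    using length_nyldon_proper_suffix_of_append_le[OF \<open>nyldon q\<close> le_q that] .
  have "p \<noteq> []"
    using \<open>nyldon p\<close> nyldon_not_Nil by blast
  have "nyldon (p @ q)"
    unfolding nyldon_iff_factorizations_short
  proof (intro conjI allI impI)
    show "p @ q \<noteq> []"
      using \<open>p \<noteq> []\<close> by simp
    fix gs assume fact: "nyldon_factorization gs (p @ q)"
    show "length gs < 2"
    proof (rule ccontr)
      assume "\<not> length gs < 2"
      then obtain hs l where gs: "gs = hs @ [l]" "hs \<noteq> []"
        by (cases gs rule: rev_cases) auto
      have fact_hs: "nyldon_factorization hs (concat hs)" and "nyldon l"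
        and pq: "p @ q = concat hs @ l"
        using fact gs by (auto simp: nyldon_factorization_def sorted_append)
      have "length q \<le> length l"
        using nyldon_suffix_le_last_factor fact gs \<open>nyldon q\<close> by blast
      moreover have "concat hs \<noteq> []"
        using fact_hs \<open>hs \<noteq> []\<close> nyldon_factorization_Nil_iff by blast
      then have "length l \<le> length q"
        using short \<open>nyldon l\<close> pq by (auto simp: proper_suffix_def)
      ultimately have "l = q" "concat hs = p"
        using pq by (auto simp: append_eq_append_conv)
      then have "hs = [p]"
        using nyldon_factorization_of_nyldon[OF \<open>nyldon p\<close>] fact_hs by simp
      with fact gs \<open>l = q\<close> have "p \<le> q"
        by (simp add: nyldon_factorization_def)
      with \<open>q < p\<close> show False
        by simp
    qed
  qed
  moreover have "is_longest_nyldon_proper_suffix q (p @ q)"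
    using \<open>p \<noteq> []\<close> \<open>nyldon q\<close> short
    by (auto simp: is_longest_nyldon_proper_suffix_def proper_suffix_def)
  ultimately show ?thesis ..
qed

lemma nyldon_singleton: "nyldon [x]"
  by (subst nyldon.simps) simp

lemma proper_suffix_singleton_iff: "proper_suffix t [x] \<longleftrightarrow> t = []"
  by (auto simp: proper_suffix_def Cons_eq_append_conv)

lemma fibw_Suc: "fibw (Suc k) = a # H (Suc k)"
proof -
  have "\<exists>r. fibw (Suc k) = a # r"
    by (induction k) auto
  then show ?thesis
    by (auto simp: H_def)
qed

lemma H_Suc_Suc_Suc: "H (Suc (Suc (Suc k))) = H (Suc (Suc k)) @ a # H (Suc k)"
proof -
  have "H (Suc (Suc (Suc k))) = drop 1 (fibw (Suc (Suc k)) @ fibw (Suc k))"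
    by (simp add: H_def)
  also have "\<dots> = H (Suc (Suc k)) @ a # H (Suc k)"
    by (simp only: fibw_Suc) simp
  finally show ?thesis .
qed

lemma H_snoc_a_le: "H (Suc k) @ [a] \<le> H (Suc (Suc k))"
proof (cases k)
  case 0
  then show ?thesis
    by (simp add: H_def less_letter_def letter_less_def)
next
  case (Suc j)
  then show ?thesis
    using list_le_append_right[of "H (Suc (Suc j)) @ [a]" "H (Suc j)"] by (simp add: H_Suc_Suc_Suc)
qed

lemma nyldon_ba: "nyldon [b, a] \<and> is_longest_nyldon_proper_suffix [a] [b, a]"
  using nyldon_append[of "[b]" "[a]"]
  by (auto simp: nyldon_singleton less_letter_def letter_less_def proper_suffix_singleton_iff
      dest: nyldon_not_Nil)

lemma nyldon_H:
  "nyldon (H (Suc (Suc k))) \<and> nyldon (H (Suc (Suc k)) @ [a]) \<and>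
   is_longest_nyldon_proper_suffix (H k @ [a]) (H (Suc (Suc k)) @ [a]) \<and>
   (2 \<le> k \<longrightarrow> is_longest_nyldon_proper_suffix (H k) (H (Suc (Suc k))))"
proof (induction k rule: fibw.induct)
  case 1
  then show ?case
    using nyldon_ba by (simp add: H_def nyldon_singleton)
next
  case 2
  have "t \<le> [a]" if "proper_suffix t [b, a]" "nyldon t" for t
    using le_longest_nyldon_proper_suffix[OF conjunct2[OF nyldon_ba] that]
    by (auto simp: proper_suffix_singleton_iff dest: nyldon_not_Nil)
  then show ?case
    using nyldon_append[of "[b, a]" "[a]"] nyldon_ba
    by (simp add: H_def nyldon_singleton less_letter_def letter_less_def)
next
  case (3 k)
  define p where "p = H (Suc (Suc (Suc k))) @ [a]"
  define q where "q = H (Suc (Suc k))"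
  have "nyldon p" and longest_p: "is_longest_nyldon_proper_suffix (H (Suc k) @ [a]) p"
    using "3.IH"(1) by (simp_all add: p_def)
  have "nyldon q" "nyldon (q @ [a])"
    using "3.IH"(2) by (simp_all add: q_def)
  have p_eq: "p = q @ a # H (Suc k) @ [a]"
    by (simp add: p_def q_def H_Suc_Suc_Suc)
  have le_q: "t \<le> q" if "proper_suffix t p" "nyldon t" for t
  proof -
    have "t \<le> H (Suc k) @ [a]"
      using le_longest_nyldon_proper_suffix[OF longest_p that] nyldon_proper_suffix_less
        longest_p by (auto simp: is_longest_nyldon_proper_suffix_def)
    also have "\<dots> \<le> q"
      by (simp add: q_def H_snoc_a_le)
    finally show ?thesis .
  qed
  then have le_qa: "t \<le> q @ [a]" if "proper_suffix t p" "nyldon t" for t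
    using that list_le_append_right order_trans by blast
  have "q < p" "q @ [a] < p"
    using list_less_append_right[of "a # H (Suc k) @ [a]" q]
      list_less_append_right[of "H (Suc k) @ [a]" "q @ [a]"] p_eq by simp_all
  then have "nyldon (p @ q) \<and> is_longest_nyldon_proper_suffix q (p @ q)"
    and "nyldon (p @ q @ [a]) \<and> is_longest_nyldon_proper_suffix (q @ [a]) (p @ q @ [a])"
    using nyldon_append[OF \<open>nyldon p\<close> \<open>nyldon q\<close> _ le_q]
      nyldon_append[OF \<open>nyldon p\<close> \<open>nyldon (q @ [a])\<close> _ le_qa]
    by simp_all
  moreover have "H (Suc (Suc (Suc (Suc k)))) = p @ q"
    by (simp add: p_def q_def H_Suc_Suc_Suc)
  ultimately show ?case
    by (simp add: q_def)
qed

theorem lemma3: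
  shows "(\<forall>k\<ge>2. nyldon (H k) \<and> nyldon (H k @ [a])) \<and>
         (\<forall>k\<ge>4. is_longest_nyldon_proper_suffix (H (k - 2)) (H k) \<and>
                 is_longest_nyldon_proper_suffix (H (k - 2) @ [a]) (H k @ [a]))"
proof -
  have "nyldon (H k) \<and> nyldon (H k @ [a]) \<and>
    (4 \<le> k \<longrightarrow> is_longest_nyldon_proper_suffix (H (k - 2)) (H k) \<and>
                 is_longest_nyldon_proper_suffix (H (k - 2) @ [a]) (H k @ [a]))"
    if "2 \<le> k" for k
  proof -
    obtain j where "k = Suc (Suc j)"
      using \<open>2 \<le> k\<close> by (metis add_2_eq_Suc le_Suc_ex)
    then show ?thesis
      using nyldon_H[of j] by simp
  qed
  moreover have "2 \<le> k" if "4 \<le> k" for k :: nat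
    using that by simp
  ultimately show ?thesis
    by blast
qed

end
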